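(* Let $n,m,\delta$ be integers with $\delta \geq n$ and $\delta \geq (m+2)/2$. Then every hypergraph with $n$ vertices, $m$ edges and minimum degree at least $\delta$ is super-pancyclic.
   Context: A hypergraph $\mathcal{H}$ consists of a vertex set $V(\mathcal{H})$ and an edge set $E(\mathcal{H})$ of subsets of $V(\mathcal{H})$; the degree of a vertex is the number of edges containing it. A Berge cycle of length $\ell$ consists of $\ell$ distinct vertices $v_1,\dots,v_\ell$ (its base vertices) and $\ell$ distinct edges $e_1,\dots,e_\ell$ with $v_i,v_{i+1}\in e_i$ (indices mod $\ell$). $\mathcal{H}$ is super-pancyclic if for every $A \subseteq V(\mathcal{H})$ with $|A|\geq 3$, $\mathcal{H}$ has a Berge cycle whose set of base vertices is exactly $A$. *)

theory Defs
  imports Main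
begin

definition hypergraph :: "'a set \<Rightarrow> 'a set set \<Rightarrow> bool" where
  "hypergraph V E \<longleftrightarrow> finite V \<and> (\<forall>e\<in>E. e \<subseteq> V)"

definition hdegree :: "'a set set \<Rightarrow> 'a \<Rightarrow> nat" where
  "hdegree E v = card {e \<in> E. v \<in> e}"

definition berge_cycle :: "'a set \<Rightarrow> 'a set set \<Rightarrow> 'a list \<Rightarrow> 'a set list \<Rightarrow> bool" where
  "berge_cycle V E vs es \<longleftrightarrow>
     length es = length vs \<and> distinct vs \<and> distinct es \<and>
     set vs \<subseteq> V \<and> set es \<subseteq> E \<and>
     (\<forall>i < length vs. vs ! i \<in> es ! i \<and> vs ! ((i + 1) mod length vs) \<in> es ! i)"

definition super_pancyclic :: "'a set \<Rightarrow> 'a set set \<Rightarrow> bool" where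
  "super_pancyclic V E \<longleftrightarrow>
     (\<forall>A. A \<subseteq> V \<and> card A \<ge> 3 \<longrightarrow> (\<exists>vs es. berge_cycle V E vs es \<and> set vs = A))"

end

theory Submission imports Defs begin

(* Any two vertices of degree at least d share at least two edges, since 2d >= m + 2.
   A set A of vertices is covered by a Berge cycle by adding its vertices one at a time. Let
   C = v_0 e_0 v_1 ... e_(t-1) v_0 be a cycle on t < |A| <= d vertices of A and x a vertex of A
   not on C. If no edge of C contains x, two edges shared by x with v_0 and with v_1 give the
   detour v_0 x v_1. Otherwise let I be the set of indices i with x in e_i. If C cannot be
   extended, the edges at x off C and, for each i in I, the edges at v_(i+1) off C are pairwise
   disjoint: an edge in two of these sets allows a detour through x or a rotation of C through x.
   These sets have at least d - |I| and d - t edges respectively and lie among the m - t edges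
   off C, which forces 2d <= m + 1. *)

fun berge_path :: "'a list \<Rightarrow> 'a set list \<Rightarrow> bool" where
  "berge_path [v] [] = True"
| "berge_path (u # v # vs) (e # es) = (u \<in> e \<and> v \<in> e \<and> berge_path (v # vs) es)"
| "berge_path _ _ = False"

lemma berge_path_length: "berge_path P es \<Longrightarrow> length P = Suc (length es)"
  by (induction P es rule: berge_path.induct) auto

lemma berge_path_nth:
  "berge_path P es \<Longrightarrow> i < length es \<Longrightarrow> P ! i \<in> es ! i \<and> P ! Suc i \<in> es ! i"
proof (induction P es arbitrary: i rule: berge_path.induct)
  case (2 u v vs e es)
  then show ?case by (cases i) auto
qed auto

lemma berge_path_append:
  "berge_path P es1 \<Longrightarrow> berge_path Q es2 \<Longrightarrow> last P = hd Q \<Longrightarrow> berge_path (P @ tl Q) (es1 @ es2)"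
proof (induction P es1 rule: berge_path.induct)
  case (1 v)
  then show ?case by (cases Q) auto
qed auto

lemma berge_path_snoc:
  "berge_path P es \<Longrightarrow> last P \<in> e \<Longrightarrow> v \<in> e \<Longrightarrow> berge_path (P @ [v]) (es @ [e])"
  using berge_path_append[of P es "[last P, v]" "[e]"] by simp

lemma berge_path_appendD:
  "berge_path (P @ Q) (es1 @ e # es2) \<Longrightarrow> length P = Suc (length es1) \<Longrightarrow>
   berge_path P es1 \<and> last P \<in> e \<and> hd Q \<in> e \<and> berge_path Q es2"
proof (induction es1 arbitrary: P)
  case Nil
  then obtain p where "P = [p]" by (cases P) auto
  with Nil show ?case by (cases Q) auto
next
  case (Cons e1 es1)
  then obtain p q P' where P: "P = p # q # P'" by (cases P rule: remdups_adj.cases) auto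
  with Cons.prems have "berge_path ((q # P') @ Q) (es1 @ e # es2)" by simp
  from Cons.IH[OF this] Cons.prems P show ?case by simp
qed

lemma berge_path_rev: "berge_path P es \<Longrightarrow> berge_path (rev P) (rev es)"
proof (induction P es rule: berge_path.induct)
  case (2 u v vs e es)
  have "berge_path ((rev vs @ [v]) @ tl [v, u]) (rev es @ [e])"
    by (rule berge_path_append) (use 2 in auto)
  then show ?case by simp
qed auto

(* The base vertices are listed with the first one repeated at the end. Unlike a Berge cycle,
   a closed Berge path may have length 1 or 2, which lets the construction start from one vertex. *)

definition closed_berge_path :: "'a set set \<Rightarrow> 'a list \<Rightarrow> 'a set list \<Rightarrow> bool" where
  "closed_berge_path E W es \<longleftrightarrow> berge_path W es \<and> es \<noteq> [] \<and> hd W = last W \<and>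
     distinct (butlast W) \<and> distinct es \<and> set es \<subseteq> E"

definition extendable :: "'a set set \<Rightarrow> 'a list \<Rightarrow> 'a \<Rightarrow> bool" where
  "extendable E W x \<longleftrightarrow> (\<exists>W' es'. closed_berge_path E W' es' \<and> set W' = insert x (set W))"

lemma closed_berge_path_set_butlast:
  assumes "closed_berge_path E W es"
  shows "set (butlast W) = set W"
proof -
  have W: "berge_path W es" "es \<noteq> []" "hd W = last W"
    using assms by (auto simp: closed_berge_path_def)
  then obtain u v W' where "W = u # v # W'"
    using berge_path_length[OF W(1)] by (cases W rule: remdups_adj.cases) auto
  with W(3) show ?thesis by (cases W' rule: rev_cases) auto
qed

lemma closed_berge_path_card:
  assumes "closed_berge_path E W es"
  shows "card (set W) = length es"
  using assms closed_berge_path_set_butlast[OF assms] distinct_card[of "butlast W"]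
  by (auto simp: closed_berge_path_def dest: berge_path_length)

lemma berge_cycle_if_closed_berge_path:
  assumes c: "closed_berge_path E W es" and V: "set W \<subseteq> V"
  shows "berge_cycle V E (butlast W) es"
proof -
  have W: "berge_path W es" "es \<noteq> []" "hd W = last W" "distinct (butlast W)" "distinct es"
    "set es \<subseteq> E"
    using c by (auto simp: closed_berge_path_def)
  have lW: "length W = Suc (length es)" using berge_path_length[OF W(1)] .
  have wrap: "butlast W ! ((i + 1) mod length es) = W ! Suc i" if "i < length es" for i
  proof (cases "Suc i < length es")
    case True
    then show ?thesis using lW by (simp add: nth_butlast)
  next
    case False
    then have "Suc i = length es" using that by simp
    then show ?thesis using W(2,3) lW
      by (cases W) (auto simp: nth_butlast last_conv_nth)
  qed
  show ?thesis
    unfolding berge_cycle_def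
    using W lW V berge_path_nth[OF W(1)] wrap
    by (auto simp: nth_butlast dest: in_set_butlastD)
qed

lemma closed_berge_path_insert:
  assumes c: "closed_berge_path E W es" and W: "W = Wa @ Wb" and es: "es = esa @ e # esb"
    and l: "length Wa = Suc (length esa)"
    and x: "x \<notin> set W" and fg: "f \<in> E" "g \<in> E" "f \<noteq> g"
    and fn: "f \<notin> set esa" "f \<notin> set esb" and gn: "g \<notin> set esa" "g \<notin> set esb"
    and adj: "last Wa \<in> f" "x \<in> f" "x \<in> g" "hd Wb \<in> g"
  shows "closed_berge_path E (Wa @ x # Wb) (esa @ f # g # esb)"
proof -
  have b: "berge_path W es" "hd W = last W" "distinct (butlast W)" "distinct es" "set es \<subseteq> E"
    using c by (auto simp: closed_berge_path_def)
  have sp: "berge_path Wa esa" "berge_path Wb esb"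
    using berge_path_appendD[of Wa Wb esa e esb] b(1) W es l by auto
  have Wbne: "Wb \<noteq> []" using berge_path_length[OF sp(2)] by auto
  have "berge_path ((Wa @ [x]) @ [hd Wb]) ((esa @ [f]) @ [g])"
    by (intro berge_path_snoc) (use sp adj in auto)
  from berge_path_append[OF this sp(2)] have "berge_path (Wa @ x # Wb) (esa @ f # g # esb)"
    using Wbne by (cases Wb) auto
  moreover have "hd (Wa @ x # Wb) = last (Wa @ x # Wb)"
    using b(2) W l Wbne by (cases Wa) auto
  moreover have "distinct (butlast (Wa @ x # Wb))"
    using b(3) W Wbne x by (auto simp: butlast_append dest: in_set_butlastD)
  moreover have "distinct (esa @ f # g # esb)" "set (esa @ f # g # esb) \<subseteq> E"
    using b(4,5) es fg fn gn by auto
  ultimately show ?thesis unfolding closed_berge_path_def by simp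
qed

lemma closed_berge_path_insert_nth:
  assumes c: "closed_berge_path E W es" and i: "i < length es" and x: "x \<notin> set W"
    and fg: "f \<in> E" "g \<in> E" "f \<noteq> g" "f \<notin> set es - {es!i}" "g \<notin> set es - {es!i}"
    and adj: "W!i \<in> f" "x \<in> f" "x \<in> g" "W!Suc i \<in> g"
  shows "extendable E W x"
proof -
  have lW: "length W = Suc (length es)"
    using c berge_path_length by (auto simp: closed_berge_path_def)
  define Wa where "Wa = take (Suc i) W"
  define Wb where "Wb = drop (Suc i) W"
  define esa where "esa = take i es"
  define esb where "esb = drop (Suc i) es"
  have W: "W = Wa @ Wb" unfolding Wa_def Wb_def by simp
  have es: "es = esa @ es!i # esb" unfolding esa_def esb_def using id_take_nth_drop[OF i] .
  have l: "length Wa = Suc (length esa)" unfolding Wa_def esa_def using lW i by simp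
  have ends: "last Wa = W ! i" "hd Wb = W ! Suc i"
    unfolding Wa_def Wb_def using lW i by (simp_all add: take_Suc_conv_app_nth hd_drop_conv_nth)
  have "distinct es" using c by (simp add: closed_berge_path_def)
  then have "distinct (esa @ es!i # esb)" using es by metis
  moreover have "set es = set esa \<union> insert (es!i) (set esb)" using arg_cong[OF es, of set] by simp
  ultimately have "f \<notin> set esa" "f \<notin> set esb" "g \<notin> set esa" "g \<notin> set esb"
    using fg(4,5) by auto
  then have "closed_berge_path E (Wa @ x # Wb) (esa @ f # g # esb)"
    by (intro closed_berge_path_insert[OF c W es l]) (use x fg adj ends in auto)
  moreover have "set (Wa @ x # Wb) = insert x (set W)" using W by auto
  ultimately show ?thesis unfolding extendable_def by blast
qed

(* With Wa = v_0 ... v_i, Wb = v_(i+1) ... v_j and Wc = v_(j+1) ... v_t, the new cycle runs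
   v_(i+1) ... v_j, x, v_i ... v_0 = v_t, v_(t-1) ... v_(j+1) and closes through f. *)

lemma closed_berge_path_rotate:
  assumes c: "closed_berge_path E W es" and W: "W = Wa @ Wb @ Wc"
    and es: "es = esa @ e # esb @ e' # esc"
    and la: "length Wa = Suc (length esa)" and lb: "length Wb = Suc (length esb)"
    and x: "x \<notin> set W" and f: "f \<in> E" "f \<notin> set es"
    and adj: "x \<in> e" "x \<in> e'" "hd Wb \<in> f" "hd Wc \<in> f"
  shows "extendable E W x"
proof -
  have b: "berge_path W es" "hd W = last W" "distinct (butlast W)" "distinct es" "set es \<subseteq> E"
    using c by (auto simp: closed_berge_path_def)
  have s1: "berge_path Wa esa" "last Wa \<in> e" "berge_path (Wb @ Wc) (esb @ e' # esc)"
    using berge_path_appendD[of Wa "Wb @ Wc" esa e "esb @ e' # esc"] b(1) W es la by auto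
  have s2: "berge_path Wb esb" "last Wb \<in> e'" "berge_path Wc esc"
    using berge_path_appendD[of Wb Wc esb e' esc] s1(3) lb by auto
  obtain Wa' va where Wa: "Wa = Wa' @ [va]" using la by (cases Wa rule: rev_cases) auto
  obtain Wc' vc where Wc: "Wc = Wc' @ [vc]"
    using berge_path_length[OF s2(3)] by (cases Wc rule: rev_cases) auto
  obtain vb Wb' where Wb: "Wb = vb # Wb'" using lb by (cases Wb) auto
  have hdW: "hd W = hd Wa" "last W = vc" using W Wa Wc by (cases Wa', auto)
  have "berge_path ((Wb @ [x]) @ [last Wa]) ((esb @ [e']) @ [e])"
    by (intro berge_path_snoc) (use s1 s2 adj in auto)
  from berge_path_append[OF this berge_path_rev[OF s1(1)]]
  have "berge_path (Wb @ x # rev Wa) (esb @ [e', e] @ rev esa)" using Wa by simp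
  from berge_path_append[OF this berge_path_rev[OF s2(3)]]
  have "berge_path (Wb @ x # rev Wa @ rev Wc') (esb @ [e', e] @ rev esa @ rev esc)"
    using Wa Wc hdW b(2) by (cases Wa') (simp_all add: last_rev)
  then have "berge_path ((Wb @ x # rev Wa @ rev Wc') @ [vb])
      ((esb @ [e', e] @ rev esa @ rev esc) @ [f])"
    by (rule berge_path_snoc) (use Wc Wa Wb hdW b(2) adj in \<open>cases Wc', auto simp: last_rev\<close>)
  then have "closed_berge_path E (Wb @ x # rev Wa @ rev Wc' @ [vb])
      (esb @ [e', e] @ rev esa @ rev esc @ [f])"
    unfolding closed_berge_path_def
    using b es f x W Wb Wc by (auto simp: butlast_append)
  moreover have "set (Wb @ x # rev Wa @ rev Wc' @ [vb]) = insert x (set W)"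
    using W Wa Wb Wc hdW b(2) by (cases Wa') auto
  ultimately show ?thesis unfolding extendable_def by blast
qed

lemma closed_berge_path_rotate_nth:
  assumes c: "closed_berge_path E W es" and ij: "i < j" "j < length es" and x: "x \<notin> set W"
    and f: "f \<in> E" "f \<notin> set es"
    and adj: "x \<in> es!i" "x \<in> es!j" "W!Suc i \<in> f" "W!Suc j \<in> f"
  shows "extendable E W x"
proof -
  have lW: "length W = Suc (length es)"
    using c berge_path_length by (auto simp: closed_berge_path_def)
  define Wb where "Wb = take (j - i) (drop (Suc i) W)"
  define esb where "esb = take (j - Suc i) (drop (Suc i) es)"
  have "W = take (Suc i) W @ Wb @ drop (Suc j) W"
    unfolding Wb_def using ij
    by (metis append_take_drop_id drop_drop add_Suc_right le_add_diff_inverse2 less_imp_le_nat)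
  moreover have "es = take i es @ es!i # esb @ es!j # drop (Suc j) es"
  proof -
    have "drop (j - Suc i) (drop (Suc i) es) = es!j # drop (Suc j) es"
      using ij by (simp add: Cons_nth_drop_Suc)
    then show ?thesis unfolding esb_def
      by (metis append_take_drop_id id_take_nth_drop ij less_trans)
  qed
  ultimately show ?thesis
    by (rule closed_berge_path_rotate[OF c _ _ _ _ x f])
       (use adj lW ij in \<open>auto simp: Wb_def esb_def hd_drop_conv_nth\<close>)
qed

definition incident_edges :: "'a set set \<Rightarrow> 'a \<Rightarrow> 'a set set" where
  "incident_edges E v = {e \<in> E. v \<in> e}"

lemma hdegree_eq_card_incident_edges: "hdegree E v = card (incident_edges E v)"
  by (simp add: hdegree_def incident_edges_def)

lemma two_le_card_common_incident_edges:
  assumes "finite E" "card E + 2 \<le> 2 * d" "d \<le> hdegree E u" "d \<le> hdegree E v"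
  shows "2 \<le> card (incident_edges E u \<inter> incident_edges E v)"
proof -
  have "card (incident_edges E u) + card (incident_edges E v) =
      card (incident_edges E u \<union> incident_edges E v) + card (incident_edges E u \<inter> incident_edges E v)"
    by (rule card_Un_Int) (simp_all add: incident_edges_def assms(1))
  moreover have "card (incident_edges E u \<union> incident_edges E v) \<le> card E"
    by (rule card_mono) (auto simp: incident_edges_def assms(1))
  ultimately show ?thesis using assms(2-4) by (simp add: hdegree_eq_card_incident_edges)
qed

lemma closed_berge_path_extend_avoiding:
  assumes fin: "finite E" and c: "closed_berge_path E W es"
    and x: "x \<notin> set W" "\<forall>e \<in> set es. x \<notin> e"
    and deg: "card E + 2 \<le> 2 * d" "\<forall>v \<in> insert x (set W). d \<le> hdegree E v"
  shows "extendable E W x"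
proof -
  have es: "0 < length es" and lW: "length W = Suc (length es)"
    using c berge_path_length by (auto simp: closed_berge_path_def)
  then have "W ! 0 \<in> set W" "W ! 1 \<in> set W" by auto
  then have common: "2 \<le> card (incident_edges E x \<inter> incident_edges E (W ! k))" if "k \<le> 1" for k
    using that deg by (intro two_le_card_common_incident_edges[OF fin deg(1)]) (auto simp: le_Suc_eq)
  then obtain g where g: "g \<in> incident_edges E x \<inter> incident_edges E (W ! 1)"
    by (metis card.empty ex_in_conv not_numeral_le_zero order_refl)
  have "0 < card (incident_edges E x \<inter> incident_edges E (W ! 0) - {g})"
    using common[of 0] fin by (simp add: card_Diff_singleton_if incident_edges_def)
  then obtain f where f: "f \<in> incident_edges E x \<inter> incident_edges E (W ! 0)" "f \<noteq> g"
    by (metis card_gt_0_iff ex_in_conv Diff_iff singletonI)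
  show ?thesis
    by (rule closed_berge_path_insert_nth[OF c es x(1), of f g])
       (use f g x(2) in \<open>auto simp: incident_edges_def\<close>)
qed

lemma card_le_card_if_disjoint_family:
  assumes "finite F" "finite I" "X \<subseteq> F" "\<forall>i\<in>I. D i \<subseteq> F" "\<forall>i\<in>I. X \<inter> D i = {}"
    and "\<forall>i\<in>I. \<forall>j\<in>I. i \<noteq> j \<longrightarrow> D i \<inter> D j = {}"
  shows "card X + (\<Sum>i\<in>I. card (D i)) \<le> card F"
proof -
  have fin: "finite X" "\<forall>i\<in>I. finite (D i)" using assms(1,3,4) finite_subset by blast+
  have "card X + (\<Sum>i\<in>I. card (D i)) = card X + card (\<Union>i\<in>I. D i)"
    using card_UN_disjoint[OF assms(2), of D] fin assms(6) by simp
  also have "\<dots> = card (X \<union> (\<Union>i\<in>I. D i))"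
    using fin assms(2,5) by (intro card_Un_disjoint[symmetric]) auto
  also have "\<dots> \<le> card F" using assms(1,3,4) by (intro card_mono) auto
  finally show ?thesis .
qed

lemma two_mult_le_card_if_disjoint_family:
  assumes "finite F" "finite I" "I \<noteq> {}" "t < d"
    and "X \<subseteq> F" "\<forall>i\<in>I. D i \<subseteq> F" "\<forall>i\<in>I. X \<inter> D i = {}"
    and "\<forall>i\<in>I. \<forall>j\<in>I. i \<noteq> j \<longrightarrow> D i \<inter> D j = {}"
    and "d \<le> card X + card I" "\<forall>i\<in>I. d - t \<le> card (D i)"
  shows "2 * d \<le> card F + t + 1"
proof -
  have "card I * (d - t) \<le> (\<Sum>i\<in>I. card (D i))"
    using sum_bounded_below[of I "d - t" "\<lambda>i. card (D i)"] assms(10) by simp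
  moreover have "card X + (\<Sum>i\<in>I. card (D i)) \<le> card F"
    using card_le_card_if_disjoint_family assms(1,2,5-8) by blast
  moreover have "(d - t) + card I - 1 \<le> card I * (d - t)"
  proof -
    obtain p where p: "card I = Suc p" using assms(2,3) by (cases "card I") auto
    obtain q where q: "d - t = Suc q" using assms(4) by (cases "d - t") auto
    show ?thesis unfolding p q by simp
  qed
  ultimately show ?thesis using assms(2-4,9) card_gt_0_iff[of I] by linarith
qed

lemma not_extendable_detour_disjoint:
  assumes c: "closed_berge_path E W es" and x: "x \<notin> set W" "\<not> extendable E W x"
    and i: "i < length es" "x \<in> es ! i"
  shows "(incident_edges E x - set es) \<inter> (incident_edges E (W ! Suc i) - set es) = {}"
proof (rule ccontr)
  assume "(incident_edges E x - set es) \<inter> (incident_edges E (W ! Suc i) - set es) \<noteq> {}"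
  then obtain g where g: "g \<in> incident_edges E x - set es" "g \<in> incident_edges E (W ! Suc i)"
    by blast
  have "es ! i \<in> set es" "set es \<subseteq> E" "W ! i \<in> es ! i"
    using c i berge_path_nth by (auto simp: closed_berge_path_def)
  then have "extendable E W x"
    using g i by (intro closed_berge_path_insert_nth[OF c i(1) x(1), of "es ! i" g])
      (auto simp: incident_edges_def)
  with x(2) show False ..
qed

lemma not_extendable_rotation_disjoint:
  assumes c: "closed_berge_path E W es" and x: "x \<notin> set W" "\<not> extendable E W x"
    and ij: "i < j" "j < length es" "x \<in> es ! i" "x \<in> es ! j"
  shows "(incident_edges E (W ! Suc i) - set es) \<inter> (incident_edges E (W ! Suc j) - set es) = {}"
proof (rule ccontr)
  assume "(incident_edges E (W ! Suc i) - set es) \<inter> (incident_edges E (W ! Suc j) - set es) \<noteq> {}"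
  then obtain f where "f \<in> incident_edges E (W ! Suc i) - set es" "f \<in> incident_edges E (W ! Suc j)"
    by blast
  then have "extendable E W x"
    using ij by (intro closed_berge_path_rotate_nth[OF c ij(1,2) x(1), of f])
      (auto simp: incident_edges_def)
  with x(2) show False ..
qed

lemma closed_berge_path_extend_through:
  assumes fin: "finite E" and c: "closed_berge_path E W es"
    and x: "x \<notin> set W" "i\<^sub>0 < length es" "x \<in> es ! i\<^sub>0"
    and deg: "card E + 2 \<le> 2 * d" "length es < d" "\<forall>v \<in> insert x (set W). d \<le> hdegree E v"
  shows "extendable E W x"
proof (rule ccontr)
  assume stuck: "\<not> extendable E W x"
  have es: "distinct es" "set es \<subseteq> E" and lW: "length W = Suc (length es)"
    using c berge_path_length by (auto simp: closed_berge_path_def)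
  define t where "t = length es"
  define I where "I = {i. i < t \<and> x \<in> es ! i}"
  define Nx where "Nx = incident_edges E x - set es"
  define D where "D i = incident_edges E (W ! Suc i) - set es" for i
  have card_es: "card (set es) = t" using es(1) by (simp add: t_def distinct_card)
  have I: "finite I" "I \<noteq> {}" using x(2,3) by (auto simp: I_def t_def)
  have Nx_D: "\<forall>i\<in>I. Nx \<inter> D i = {}"
    using not_extendable_detour_disjoint[OF c x(1) stuck] by (simp add: I_def t_def Nx_def D_def)
  have "D i \<inter> D j = {}" if "i \<in> I" "j \<in> I" "i < j" for i j
    using not_extendable_rotation_disjoint[OF c x(1) stuck] that by (simp add: I_def t_def D_def)
  then have D_D: "\<forall>i\<in>I. \<forall>j\<in>I. i \<noteq> j \<longrightarrow> D i \<inter> D j = {}"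
    by (metis Int_commute linorder_neqE_nat)
  have "incident_edges E x \<subseteq> Nx \<union> (\<lambda>i. es ! i) ` I"
    by (auto simp: Nx_def I_def t_def incident_edges_def in_set_conv_nth)
  then have "card (incident_edges E x) \<le> card (Nx \<union> (\<lambda>i. es ! i) ` I)"
    using fin I(1) by (intro card_mono) (auto simp: Nx_def incident_edges_def)
  also have "\<dots> \<le> card Nx + card ((\<lambda>i. es ! i) ` I)" by (rule card_Un_le)
  also have "\<dots> \<le> card Nx + card I" using card_image_le[OF I(1)] by simp
  finally have card_Nx: "d \<le> card Nx + card I"
    using deg(3) by (simp add: hdegree_eq_card_incident_edges)
  have card_D: "d - t \<le> card (D i)" if "i \<in> I" for i
  proof -
    have "W ! Suc i \<in> set W" using that lW by (auto simp: I_def t_def)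
    then have "d - t \<le> card (incident_edges E (W ! Suc i)) - card (set es)"
      using deg(3) card_es by (auto simp: hdegree_eq_card_incident_edges)
    then show ?thesis unfolding D_def using diff_card_le_card_Diff by (meson finite_set order_trans)
  qed
  have "2 * d \<le> card (E - set es) + t + 1"
    by (rule two_mult_le_card_if_disjoint_family[where D = D])
       (use fin I deg(2) Nx_D D_D card_Nx card_D
         in \<open>auto simp: t_def Nx_def D_def incident_edges_def\<close>)
  moreover have "card (E - set es) = card E - t"
    using fin es(2) card_es by (simp add: card_Diff_subset)
  ultimately show False using deg(1,2) unfolding t_def by linarith
qed

lemma closed_berge_path_extend:
  assumes fin: "finite E" and c: "closed_berge_path E W es" and x: "x \<notin> set W"
    and deg: "card E + 2 \<le> 2 * d" "length es < d" "\<forall>v \<in> insert x (set W). d \<le> hdegree E v"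
  shows "extendable E W x"
proof (cases "\<exists>e \<in> set es. x \<in> e")
  case True
  then obtain i where "i < length es" "x \<in> es ! i" by (auto simp: in_set_conv_nth)
  then show ?thesis using closed_berge_path_extend_through[OF fin c x _ _ deg] by blast
next
  case False
  then show ?thesis using closed_berge_path_extend_avoiding[OF fin c x _ deg(1,3)] by blast
qed

lemma closed_berge_path_spanning:
  assumes fin: "finite E" "finite A" and "A \<noteq> {}"
    and deg: "card E + 2 \<le> 2 * d" "card A \<le> d" "\<forall>v \<in> A. d \<le> hdegree E v"
  shows "\<exists>W es. closed_berge_path E W es \<and> set W = A"
  using fin(2) \<open>A \<noteq> {}\<close> deg(2,3)
proof (induction A rule: finite_ne_induct)
  case (singleton u)
  then have "incident_edges E u \<noteq> {}" by (auto simp: hdegree_eq_card_incident_edges)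
  then obtain e where "e \<in> E" "u \<in> e" by (auto simp: incident_edges_def)
  then have "closed_berge_path E [u, u] [e]" by (simp add: closed_berge_path_def)
  then show ?case by (intro exI[of _ "[u, u]"] exI[of _ "[e]"]) simp
next
  case (insert x B)
  then obtain W es where W: "closed_berge_path E W es" "set W = B" by auto
  moreover have "length es < d"
    using closed_berge_path_card[OF W(1)] W(2) insert.hyps insert.prems(1) by simp
  ultimately show ?case
    using closed_berge_path_extend[OF fin(1) W(1) _ deg(1)] insert.hyps insert.prems(2)
    by (auto simp: extendable_def)
qed

theorem theorem7:
  fixes V :: "'a set" and E :: "'a set set" and n m :: nat and \<delta> :: int
  assumes "hypergraph V E"
    and "card V = n" and "card E = m"
    and "\<delta> \<ge> int n" and "2 * \<delta> \<ge> int m + 2"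
    and "\<forall>v\<in>V. int (hdegree E v) \<ge> \<delta>"
  shows "super_pancyclic V E"
  unfolding super_pancyclic_def
proof (intro allI impI)
  fix A assume A: "A \<subseteq> V \<and> 3 \<le> card A"
  have fin: "finite V" "finite E"
    using assms(1) finite_subset[of E "Pow V"] by (auto simp: hypergraph_def)
  define d where "d = nat \<delta>"
  have "card E + 2 \<le> 2 * d" "card A \<le> d" "\<forall>v \<in> A. d \<le> hdegree E v"
    using assms(2-6) A card_mono[OF fin(1), of A] by (auto simp: d_def nat_le_iff)
  moreover have "finite A" "A \<noteq> {}" using A fin(1) finite_subset by auto
  ultimately obtain W es where W: "closed_berge_path E W es" "set W = A"
    using closed_berge_path_spanning[OF fin(2)] by blast
  then have "berge_cycle V E (butlast W) es" "set (butlast W) = A"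
    using A berge_cycle_if_closed_berge_path[OF W(1)] closed_berge_path_set_butlast[OF W(1)]
    by auto
  then show "\<exists>vs es. berge_cycle V E vs es \<and> set vs = A" by blast
qed

end
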